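(* Let $N\ge 2$ and $A,B,C>0$ with $B>(N-1)C$. Let $a_N=A$, $b_N=B$, $c_N=C$ and for $2\le n\le N$ let $a_{n-1}=a_n(1+c_n/b_n)$, $b_{n-1}=b_n(1-c_n^2/b_n^2)$, $c_{n-1}=c_n(1+c_n/b_n)$. Define $$\gamma=\frac{C}{(B-(N-1)C)(B+C)},\qquad \alpha=\gamma A\Big(\frac{B}{C}+1\Big),\qquad \beta=\gamma\Big(\frac{B}{C}-(N-2)\Big).$$ Then for $1\le n\le N$, $$a_n=\frac{\alpha}{\beta+(n-1)\gamma},\qquad b_n=\frac{\beta+(n-2)\gamma}{(\beta+(n-1)\gamma)(\beta-\gamma)},\qquad c_n=\frac{\gamma}{(\beta+(n-1)\gamma)(\beta-\gamma)}.$$ *)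

theory Defs
  imports Complex_Main
begin

end

theory Submission
  imports Defs
begin

text \<open>
  In the closed form, passing from index \<open>n\<close> to \<open>n - 1\<close> just replaces the denominator
  \<open>d + \<gamma>\<close> by \<open>d\<close>, where \<open>d = \<beta> + (n - 2) \<gamma>\<close>: the ratio \<open>c\<^sub>n / b\<^sub>n\<close> equals \<open>\<gamma> / d\<close>, so the
  factors \<open>1 + c\<^sub>n / b\<^sub>n\<close> and \<open>1 - c\<^sub>n\<^sup>2 / b\<^sub>n\<^sup>2\<close> are \<open>(d + \<gamma>) / d\<close> and \<open>(d - \<gamma>)(d + \<gamma>) / d\<^sup>2\<close>.
  The parameters \<open>\<alpha>, \<beta>, \<gamma>\<close> are chosen so that the closed form matches \<open>A, B, C\<close> at \<open>n = N\<close>,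
  and a downward induction finishes the proof.
\<close>

lemma closed_form_step:
  fixes \<alpha> \<beta> \<gamma> d an bn cn :: real
  assumes nz: "d \<noteq> 0" "d + \<gamma> \<noteq> 0" "\<beta> \<noteq> \<gamma>"
    and an: "an = \<alpha> / (d + \<gamma>)"
    and bn: "bn = d / ((d + \<gamma>) * (\<beta> - \<gamma>))"
    and cn: "cn = \<gamma> / ((d + \<gamma>) * (\<beta> - \<gamma>))"
  shows "an * (1 + cn / bn) = \<alpha> / d"
    and "bn * (1 - cn\<^sup>2 / bn\<^sup>2) = (d - \<gamma>) / (d * (\<beta> - \<gamma>))"
    and "cn * (1 + cn / bn) = \<gamma> / (d * (\<beta> - \<gamma>))"
proof -
  have ratio: "cn / bn = \<gamma> / d" unfolding bn cn using nz by simp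
  have growth: "1 + cn / bn = (d + \<gamma>) / d"
    unfolding ratio using nz by (simp add: field_simps)
  have shrink: "1 - cn\<^sup>2 / bn\<^sup>2 = (d - \<gamma>) * (d + \<gamma>) / (d * d)"
    unfolding power_divide[symmetric] ratio using nz by (simp add: field_simps power2_eq_square)
  show "an * (1 + cn / bn) = \<alpha> / d"
    and "bn * (1 - cn\<^sup>2 / bn\<^sup>2) = (d - \<gamma>) / (d * (\<beta> - \<gamma>))"
    and "cn * (1 + cn / bn) = \<gamma> / (d * (\<beta> - \<gamma>))"
    unfolding growth shrink unfolding an bn cn using nz by simp_all
qed

lemma closed_form_at_top:
  fixes m A B C \<alpha> \<beta> \<gamma> :: real
  assumes nz: "C \<noteq> 0" "B \<noteq> m * C" "B + C \<noteq> 0"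
    and \<gamma>: "\<gamma> = C / ((B - m * C) * (B + C))"
    and \<alpha>: "\<alpha> = \<gamma> * A * (B / C + 1)"
    and \<beta>: "\<beta> = \<gamma> * (B / C - (m - 1))"
  shows "\<beta> - \<gamma> = 1 / (B + C)"
    and "\<alpha> / (\<beta> + m * \<gamma>) = A"
    and "(\<beta> + (m - 1) * \<gamma>) / ((\<beta> + m * \<gamma>) * (\<beta> - \<gamma>)) = B"
    and "\<gamma> / ((\<beta> + m * \<gamma>) * (\<beta> - \<gamma>)) = C"
proof -
  have nz': "B - m * C \<noteq> 0" using nz by simp
  have sum: "B / C + 1 = (B + C) / C" using nz by (simp add: field_simps)
  have "\<beta> - \<gamma> = \<gamma> * ((B - m * C) / C)"
    unfolding \<beta> using nz by (simp add: field_simps)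
  also have "\<dots> = 1 / (B + C)" unfolding \<gamma> using nz nz' by simp
  finally show width: "\<beta> - \<gamma> = 1 / (B + C)" .
  have scale: "\<gamma> * (B / C + 1) = 1 / (B - m * C)" unfolding sum \<gamma> using nz nz' by simp
  have top: "\<beta> + m * \<gamma> = 1 / (B - m * C)"
    unfolding scale[symmetric] \<beta> by (simp add: algebra_simps)
  have "B / ((B - m * C) * (B + C)) = (B + C) / ((B - m * C) * (B + C)) - C / ((B - m * C) * (B + C))"
    by (simp only: diff_divide_distrib[symmetric] add_diff_cancel_right')
  also have "\<dots> = 1 / (B - m * C) - \<gamma>" unfolding \<gamma> using nz by simp
  also have "\<dots> = \<beta> + (m - 1) * \<gamma>" unfolding top[symmetric] by (simp add: algebra_simps)
  finally have below: "\<beta> + (m - 1) * \<gamma> = B / ((B - m * C) * (B + C))" ..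
  have "\<alpha> = A * (\<gamma> * (B / C + 1))" unfolding \<alpha> by (simp add: mult_ac)
  then show "\<alpha> / (\<beta> + m * \<gamma>) = A" unfolding top scale using nz' by simp
  show "(\<beta> + (m - 1) * \<gamma>) / ((\<beta> + m * \<gamma>) * (\<beta> - \<gamma>)) = B"
    "\<gamma> / ((\<beta> + m * \<gamma>) * (\<beta> - \<gamma>)) = C"
    unfolding below top width unfolding \<gamma> using nz nz' by simp_all
qed

theorem proposition2p5:
  fixes N :: nat and A B C :: real and a b c :: "nat \<Rightarrow> real"
  assumes hN: "N \<ge> 2"
    and hA: "A > 0" and hB: "B > 0" and hC: "C > 0"
    and hBC: "B > (real N - 1) * C"
    and haN: "a N = A" and hbN: "b N = B" and hcN: "c N = C"
    and ha: "\<And>n. 2 \<le> n \<Longrightarrow> n \<le> N \<Longrightarrow> a (n - 1) = a n * (1 + c n / b n)"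
    and hb: "\<And>n. 2 \<le> n \<Longrightarrow> n \<le> N \<Longrightarrow> b (n - 1) = b n * (1 - (c n)\<^sup>2 / (b n)\<^sup>2)"
    and hc: "\<And>n. 2 \<le> n \<Longrightarrow> n \<le> N \<Longrightarrow> c (n - 1) = c n * (1 + c n / b n)"
  shows "let \<gamma> = C / ((B - (real N - 1) * C) * (B + C));
             \<alpha> = \<gamma> * A * (B / C + 1);
             \<beta> = \<gamma> * (B / C - (real N - 2))
         in \<forall>n. 1 \<le> n \<and> n \<le> N \<longrightarrow>
              a n = \<alpha> / (\<beta> + (real n - 1) * \<gamma>) \<and>
              b n = (\<beta> + (real n - 2) * \<gamma>) / ((\<beta> + (real n - 1) * \<gamma>) * (\<beta> - \<gamma>)) \<and>
              c n = \<gamma> / ((\<beta> + (real n - 1) * \<gamma>) * (\<beta> - \<gamma>))"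
proof -
  define \<gamma> where "\<gamma> = C / ((B - (real N - 1) * C) * (B + C))"
  define \<alpha> where "\<alpha> = \<gamma> * A * (B / C + 1)"
  define \<beta> where "\<beta> = \<gamma> * (B / C - (real N - 2))"
  define closed_form where "closed_form n \<longleftrightarrow>
      a n = \<alpha> / (\<beta> + (real n - 1) * \<gamma>) \<and>
      b n = (\<beta> + (real n - 2) * \<gamma>) / ((\<beta> + (real n - 1) * \<gamma>) * (\<beta> - \<gamma>)) \<and>
      c n = \<gamma> / ((\<beta> + (real n - 1) * \<gamma>) * (\<beta> - \<gamma>))" for n
  have \<gamma>_pos: "\<gamma> > 0" unfolding \<gamma>_def using hB hC hBC by simp
  have \<beta>': "\<beta> = \<gamma> * (B / C - (real N - 1 - 1))" unfolding \<beta>_def by simp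
  have "C \<noteq> 0" "B \<noteq> (real N - 1) * C" "B + C \<noteq> 0" using hB hC hBC by auto
  note top = closed_form_at_top[OF this \<gamma>_def \<alpha>_def \<beta>']
  have "\<beta> - \<gamma> > 0" using top(1) hB hC by simp
  have at_top: "closed_form N"
    unfolding closed_form_def using top hB hC hBC haN hbN hcN by (simp add: algebra_simps)
  have descend: "closed_form k" if "1 \<le> k" "k < N" "closed_form (Suc k)" for k
  proof -
    define d where "d = \<beta> + (real k - 1) * \<gamma>"
    have "(real k - 1) * \<gamma> \<ge> 0" using \<gamma>_pos \<open>1 \<le> k\<close> by simp
    then have "d > 0" unfolding d_def using \<gamma>_pos \<open>\<beta> - \<gamma> > 0\<close> by linarith
    have "closed_form (Suc k) \<longleftrightarrow>
        a (Suc k) = \<alpha> / (d + \<gamma>) \<and>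
        b (Suc k) = d / ((d + \<gamma>) * (\<beta> - \<gamma>)) \<and>
        c (Suc k) = \<gamma> / ((d + \<gamma>) * (\<beta> - \<gamma>))"
      unfolding closed_form_def d_def by (simp add: algebra_simps)
    then have "a k = \<alpha> / d \<and> b k = (d - \<gamma>) / (d * (\<beta> - \<gamma>)) \<and> c k = \<gamma> / (d * (\<beta> - \<gamma>))"
      using closed_form_step[of d \<gamma> \<beta>] \<open>d > 0\<close> \<gamma>_pos \<open>\<beta> - \<gamma> > 0\<close> \<open>closed_form (Suc k)\<close>
        ha[of "Suc k"] hb[of "Suc k"] hc[of "Suc k"] that by auto
    then show ?thesis unfolding closed_form_def d_def by (simp add: algebra_simps)
  qed
  have "closed_form n" if "1 \<le> n" "n \<le> N" for n
    using \<open>n \<le> N\<close> at_top by (rule inc_induct) (use descend \<open>1 \<le> n\<close> in auto)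
  then show ?thesis unfolding Let_def closed_form_def \<gamma>_def[symmetric] \<alpha>_def[symmetric] \<beta>_def[symmetric]
    by blast
qed

end
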